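(* Let $s\geq 2$ and let $d$ be a positive divisor of $s$. In $G_{(s,0)}$, the subgroup $H=\langle u^d\rangle\rtimes\langle\rho_0\rangle$ is core-free and $|G_{(s,0)}:H|=3ds$. Consequently $G_{(s,0)}$ has a faithful transitive permutation representation of degree $3ds$.
   Context: $G_{(s,0)}$ is the group of the toroidal hypermap $(3,3,3)_{(s,0)}$: the Coxeter group $[3,3,3]=\langle\rho_0,\rho_1,\rho_2\mid \rho_i^2=1,\ (\rho_i\rho_j)^3=1\ (i\neq j)\rangle$ factored by $(\rho_0\rho_1\rho_2\rho_1)^s$; it has order $6s^2$. Here $u=\rho_0\rho_1\rho_2\rho_1$ (a translation of order $s$, with $\rho_0 u\rho_0=u^{-1}$). A subgroup is core-free if it contains no nontrivial normal subgroup of the group. *)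

theory Defs
  imports "HOL-Algebra.Algebra"
begin

datatype gen = R0 | R1 | R2

text \<open>Since all generators are involutions
  (rho_i^2 = 1 is a relator), the group is presented as a monoid on words.\<close>
definition relators :: "nat \<Rightarrow> gen list set" where
  "relators s =
     {[g, g] | g. True}
   \<union> {concat (replicate 3 [g, h]) | g h. g \<noteq> h}
   \<union> {concat (replicate s [R0, R1, R2, R1])}"

inductive wcong :: "nat \<Rightarrow> gen list \<Rightarrow> gen list \<Rightarrow> bool" for s where
  rel: "r \<in> relators s \<Longrightarrow> wcong s r []"
| refl: "wcong s w w"
| sym: "wcong s a b \<Longrightarrow> wcong s b a"
| trans: "wcong s a b \<Longrightarrow> wcong s b c \<Longrightarrow> wcong s a c"
| ctxt: "wcong s a b \<Longrightarrow> wcong s (x @ a @ y) (x @ b @ y)"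

definition elt :: "nat \<Rightarrow> gen list \<Rightarrow> gen list set" where
  "elt s w = {c. wcong s c w}"

definition Gs :: "nat \<Rightarrow> gen list set monoid" where
  "Gs s = \<lparr> carrier = range (elt s),
            monoid.mult = (\<lambda>A B. {c. \<exists>a\<in>A. \<exists>b\<in>B. wcong s c (a @ b)}),
            one = elt s [] \<rparr>"

definition u_elt :: "nat \<Rightarrow> gen list set" where
  "u_elt s = elt s [R0, R1, R2, R1]"

definition core_free :: "('a, 'b) monoid_scheme \<Rightarrow> 'a set \<Rightarrow> bool" where
  "core_free G H \<longleftrightarrow> (\<forall>N. normal N G \<and> N \<subseteq> H \<longrightarrow> N = {\<one>\<^bsub>G\<^esub>})"

definition faithful_transitive_rep :: "('a, 'b) monoid_scheme \<Rightarrow> 'c set \<Rightarrow> bool" where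
  "faithful_transitive_rep G S \<longleftrightarrow>
     (\<exists>f. f \<in> hom G (BijGroup S) \<and> inj_on f (carrier G) \<and>
          (\<forall>x\<in>S. \<forall>y\<in>S. \<exists>g\<in>carrier G. f g x = y))"

end

theory Submission
  imports Defs
begin

text \<open>The group acts faithfully on \<open>(\<int>/s\<int>)\<^sup>3\<close>: \<open>\<rho>\<^sub>1\<close> and \<open>\<rho>\<^sub>2\<close> swap coordinates and \<open>\<rho>\<^sub>0\<close>
  is an affine reflection, so \<open>u\<close> acts as a translation.  Together with the relations this
  shows that every element is uniquely \<open>\<sigma> u\<^sup>i v\<^sup>j\<close> with \<open>\<sigma> \<in> \<langle>\<rho>\<^sub>1, \<rho>\<^sub>2\<rangle> \<cong> S\<^sub>3\<close>, \<open>v = \<rho>\<^sub>1 u \<rho>\<^sub>1\<close>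
  and \<open>0 \<le> i, j < s\<close>, so the order is \<open>6s\<^sup>2\<close>.  The subgroup \<open>H\<close> consists of the \<open>u\<^sup>n\<close> and
  \<open>u\<^sup>n \<rho>\<^sub>0\<close> with \<open>d | n\<close>, so \<open>|H| = 2s/d\<close> and the index is \<open>3ds\<close>.  Every element of \<open>H\<close> fixes
  the second coordinate, whereas conjugating \<open>u\<^sup>n \<noteq> 1\<close> by \<open>\<rho>\<^sub>2\<close>, or \<open>u\<^sup>n \<rho>\<^sub>0\<close> by \<open>\<rho>\<^sub>1\<close>, moves it;
  hence \<open>H\<close> is core-free, and the action on its right cosets is faithful and transitive.\<close>

lemma (in group) conj_involution_mult:
  assumes "g \<in> carrier G" "g \<otimes> g = \<one>" "x \<in> carrier G" "y \<in> carrier G"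
  shows "g \<otimes> (x \<otimes> y) \<otimes> g = (g \<otimes> x \<otimes> g) \<otimes> (g \<otimes> y \<otimes> g)"
  using assms by (simp add: m_assoc[symmetric]) (simp add: m_assoc)

lemma (in group) conj_involution_pow:
  assumes "g \<in> carrier G" "g \<otimes> g = \<one>" "x \<in> carrier G"
  shows "g \<otimes> x [^] (n::nat) \<otimes> g = (g \<otimes> x \<otimes> g) [^] n"
proof (induction n)
  case 0
  then show ?case using assms by simp
next
  case (Suc n)
  have "g \<otimes> x [^] Suc n \<otimes> g = (g \<otimes> x [^] n \<otimes> g) \<otimes> (g \<otimes> x \<otimes> g)"
    using assms conj_involution_mult[of g "x [^] n" x] by simp
  then show ?case using Suc assms by simp
qed

lemma (in group) mult_involution_conj:
  assumes "g \<in> carrier G" "g \<otimes> g = \<one>" "x \<in> carrier G" "y \<in> carrier G"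
  shows "x \<otimes> y \<otimes> g = (x \<otimes> g) \<otimes> (g \<otimes> y \<otimes> g)"
  using assms by (simp add: m_assoc) (simp add: m_assoc[symmetric])

lemma (in group) inv_involution:
  assumes "g \<in> carrier G" "g \<otimes> g = \<one>"
  shows "inv g = g"
  using assms by (intro inv_equality) auto

lemma (in group) nat_pow_mod_eq:
  assumes "x \<in> carrier G" "x [^] m = \<one>"
  shows "x [^] (n::nat) = x [^] (n mod m)"
proof -
  have "x [^] n = x [^] (m * (n div m)) \<otimes> x [^] (n mod m)"
    using assms(1) by (simp add: nat_pow_mult)
  also have "x [^] (m * (n div m)) = \<one>"
    using assms by (simp add: nat_pow_pow[symmetric])
  finally show ?thesis using assms(1) by simp
qed

lemma (in group) inv_eq_nat_pow_pred:
  assumes "x \<in> carrier G" "x [^] (m::nat) = \<one>" "0 < m"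
  shows "inv x = x [^] (m - 1)"
proof (rule inv_equality)
  have "x [^] (m - 1) \<otimes> x = x [^] Suc (m - 1)" by simp
  then show "x [^] (m - 1) \<otimes> x = \<one>" using assms by simp
qed (use assms in simp_all)

section \<open>The action on right cosets\<close>

lemma (in group) rcoset_action_hom:
  assumes "subgroup H G"
  shows "(\<lambda>g. \<lambda>Y\<in>rcosets H. Y #> inv g) \<in> hom G (BijGroup (rcosets H))"
    (is "?f \<in> _")
proof -
  have sub: "Y \<subseteq> carrier G" if "Y \<in> rcosets H" for Y
    using that assms rcosets_part_G by blast
  have closed: "Y #> a \<in> rcosets H" if Y: "Y \<in> rcosets H" and a: "a \<in> carrier G" for Y a
  proof -
    obtain x where "x \<in> carrier G" "Y = H #> x" using Y by (auto simp: RCOSETS_def)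
    then show ?thesis
      using a assms by (simp add: coset_mult_assoc subgroup.subset rcosetsI)
  qed
  have mult: "?f (g \<otimes> h) = compose (rcosets H) (?f g) (?f h)"
    if "g \<in> carrier G" "h \<in> carrier G" for g h
    using that unfolding compose_def
    by (intro restrict_ext) (simp add: closed sub coset_mult_assoc inv_mult_group)
  have cancel: "Y #> inv g #> g = Y" "Y #> g #> inv g = Y"
    if "Y \<in> rcosets H" "g \<in> carrier G" for Y g
    using that by (simp_all add: coset_mult_assoc sub)
  have Bij: "?f g \<in> Bij (rcosets H)" if "g \<in> carrier G" for g
  proof -
    have "bij_betw (?f g) (rcosets H) (rcosets H)"
      by (rule bij_betw_byWitness[where f' = "?f (inv g)"]) (use that closed cancel in auto)
    then show ?thesis by (simp add: Bij_def)
  qed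
  show ?thesis
    by (rule homI) (simp_all add: BijGroup_def Bij mult)
qed

lemma (in group) faithful_transitive_rep_rcosets:
  assumes H: "subgroup H G" and "core_free G H"
  shows "faithful_transitive_rep G (rcosets H)"
proof -
  let ?f = "\<lambda>g. \<lambda>Y\<in>rcosets H. Y #> inv g"
  have hom: "?f \<in> hom G (BijGroup (rcosets H))" using rcoset_action_hom[OF H] .
  interpret f: group_hom G "BijGroup (rcosets H)" ?f
    by (intro group_hom.intro group_hom_axioms.intro is_group group_BijGroup hom)
  have HR: "H \<in> rcosets H" using subgroup.subgroup_in_rcosets[OF H is_group] .
  have "kernel G (BijGroup (rcosets H)) ?f \<subseteq> H"
  proof
    fix g assume "g \<in> kernel G (BijGroup (rcosets H)) ?f"
    then have g: "g \<in> carrier G" and "?f g = (\<lambda>Y\<in>rcosets H. Y)"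
      by (auto simp: kernel_def BijGroup_def)
    then have "H #> inv g = H" using HR by (metis restrict_apply')
    then have "inv g \<in> H" using rcos_self[OF _ H] g by (metis inv_closed)
    then show "g \<in> H" using H g by (metis inv_inv subgroup.m_inv_closed)
  qed
  then have "kernel G (BijGroup (rcosets H)) ?f = {\<one>}"
    using assms(2) f.normal_kernel unfolding core_free_def by blast
  then have "inj_on ?f (carrier G)" using f.inj_iff_trivial_ker by simp
  moreover have "\<exists>g\<in>carrier G. ?f g Y = Z" if YZ: "Y \<in> rcosets H" "Z \<in> rcosets H" for Y Z
  proof -
    obtain x y where xy: "x \<in> carrier G" "y \<in> carrier G" "Y = H #> x" "Z = H #> y"
      using YZ by (auto simp: RCOSETS_def)
    then have "Y #> inv (inv (inv x \<otimes> y)) = Z"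
      using H by (simp add: coset_mult_assoc subgroup.subset m_assoc[symmetric])
    then show ?thesis using xy YZ by (intro bexI[of _ "inv (inv x \<otimes> y)"]) auto
  qed
  ultimately show ?thesis using hom unfolding faithful_transitive_rep_def by blast
qed

lemma hom_BijGroup_transfer:
  assumes hom: "f \<in> hom G (BijGroup S)" and \<beta>: "bij_betw \<beta> T S"
  shows "(\<lambda>g. \<lambda>i\<in>T. inv_into T \<beta> (f g (\<beta> i))) \<in> hom G (BijGroup T)" (is "?f' \<in> _")
proof -
  define \<gamma> where "\<gamma> = inv_into T \<beta>"
  have \<gamma>: "bij_betw \<gamma> S T" using \<beta> by (simp add: \<gamma>_def bij_betw_inv_into)
  have \<beta>\<gamma>: "\<beta> (\<gamma> x) = x" if "x \<in> S" for x
    using \<beta> that by (simp add: \<gamma>_def bij_betw_inv_into_right)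
  have \<beta>S: "\<beta> i \<in> S" if "i \<in> T" for i using \<beta> that by (blast dest: bij_betwE)
  have \<gamma>T: "\<gamma> x \<in> T" if "x \<in> S" for x using \<gamma> that by (blast dest: bij_betwE)
  have fBij: "f g \<in> Bij S" if "g \<in> carrier G" for g
    using hom that by (auto simp: hom_def BijGroup_def)
  have fS: "f g x \<in> S" if "g \<in> carrier G" "x \<in> S" for g x
    using fBij[OF that(1)] that(2) by (auto simp: Bij_def dest: bij_betwE)
  have f'Bij: "?f' g \<in> Bij T" if "g \<in> carrier G" for g
  proof -
    have "bij_betw (\<gamma> \<circ> f g \<circ> \<beta>) T T"
      using \<beta> \<gamma> fBij[OF that] unfolding Bij_def by (blast intro: bij_betw_trans)
    then have "bij_betw (?f' g) T T"
      by (rule bij_betw_cong[THEN iffD1, rotated]) (simp add: \<gamma>_def)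
    then show ?thesis by (simp add: Bij_def)
  qed
  show ?thesis
  proof (rule homI)
    fix g h assume gh: "g \<in> carrier G" "h \<in> carrier G"
    have fgh: "f (g \<otimes>\<^bsub>G\<^esub> h) = compose S (f g) (f h)"
      using hom gh by (simp add: hom_mult BijGroup_def fBij)
    have "?f' (g \<otimes>\<^bsub>G\<^esub> h) = compose T (?f' g) (?f' h)"
      unfolding compose_def \<gamma>_def[symmetric]
      by (rule restrict_ext) (simp add: fgh compose_def \<beta>S \<gamma>T \<beta>\<gamma> fS gh)
    then show "?f' (g \<otimes>\<^bsub>G\<^esub> h) = ?f' g \<otimes>\<^bsub>BijGroup T\<^esub> ?f' h"
      using gh f'Bij by (simp add: BijGroup_def)
  qed (simp add: BijGroup_def f'Bij)
qed

lemma faithful_transitive_rep_transfer: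
  assumes rep: "faithful_transitive_rep G S" and \<beta>: "bij_betw \<beta> T S"
  shows "faithful_transitive_rep G T"
proof -
  obtain f where hom: "f \<in> hom G (BijGroup S)" and inj: "inj_on f (carrier G)"
    and trans: "\<forall>x\<in>S. \<forall>y\<in>S. \<exists>g\<in>carrier G. f g x = y"
    using rep by (auto simp: faithful_transitive_rep_def)
  define \<gamma> where "\<gamma> = inv_into T \<beta>"
  define f' where "f' = (\<lambda>g. \<lambda>i\<in>T. \<gamma> (f g (\<beta> i)))"
  have \<gamma>\<beta>: "\<gamma> (\<beta> i) = i" if "i \<in> T" for i
    using \<beta> that by (simp add: \<gamma>_def bij_betw_inv_into_left)
  have \<beta>\<gamma>: "\<beta> (\<gamma> x) = x" if "x \<in> S" for x
    using \<beta> that by (simp add: \<gamma>_def bij_betw_inv_into_right)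
  have \<beta>S: "\<beta> i \<in> S" if "i \<in> T" for i using \<beta> that by (blast dest: bij_betwE)
  have \<gamma>T: "\<gamma> x \<in> T" if "x \<in> S" for x
    using bij_betw_inv_into[OF \<beta>] that unfolding \<gamma>_def by (blast dest: bij_betwE)
  have fBij: "f g \<in> Bij S" if "g \<in> carrier G" for g
    using hom that by (auto simp: hom_def BijGroup_def)
  have "f' \<in> hom G (BijGroup T)"
    using hom_BijGroup_transfer[OF hom \<beta>] by (simp add: f'_def \<gamma>_def)
  moreover have "inj_on f' (carrier G)"
  proof (rule inj_onI)
    fix g h assume gh: "g \<in> carrier G" "h \<in> carrier G" and eq: "f' g = f' h"
    have "f g x = f h x" if "x \<in> S" for x
    proof -
      have "\<gamma> (f g x) = \<gamma> (f h x)"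
        using fun_cong[OF eq, of "\<gamma> x"] that by (simp add: f'_def \<beta>\<gamma> \<gamma>T)
      moreover have "f g x \<in> S" "f h x \<in> S"
        using fBij gh that by (auto simp: Bij_def dest: bij_betwE)
      ultimately show ?thesis using \<beta>\<gamma> by metis
    qed
    then have "f g = f h"
      using fBij gh by (intro extensionalityI[where A = S]) (auto simp: Bij_def)
    then show "g = h" using inj gh by (simp add: inj_on_eq_iff)
  qed
  moreover have "\<exists>g\<in>carrier G. f' g i = j" if ij: "i \<in> T" "j \<in> T" for i j
  proof -
    obtain g where "g \<in> carrier G" "f g (\<beta> i) = \<beta> j"
      using trans \<beta>S[OF ij(1)] \<beta>S[OF ij(2)] by blast
    then show ?thesis using ij by (intro bexI[of _ g]) (simp_all add: f'_def \<gamma>\<beta>)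
  qed
  ultimately show ?thesis unfolding faithful_transitive_rep_def by blast
qed

section \<open>Words modulo the relators\<close>

declare wcong.trans[trans]

lemma wcong_append:
  assumes "wcong s a a'" "wcong s b b'"
  shows "wcong s (a @ b) (a' @ b')"
proof -
  have "wcong s (a @ b) (a' @ b)" using wcong.ctxt[OF assms(1), of "[]" b] by simp
  also have "wcong s (a' @ b) (a' @ b')" using wcong.ctxt[OF assms(2), of a' "[]"] by simp
  finally show ?thesis .
qed

lemma elt_eq_iff: "elt s a = elt s b \<longleftrightarrow> wcong s a b"
  unfolding elt_def by (auto intro: wcong.refl wcong.sym wcong.trans)

lemma elt_mult: "elt s a \<otimes>\<^bsub>Gs s\<^esub> elt s b = elt s (a @ b)"
  unfolding Gs_def elt_def by (auto intro: wcong.refl wcong.trans wcong_append)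

lemma carrier_Gs: "carrier (Gs s) = range (elt s)"
  by (simp add: Gs_def)

lemma one_Gs: "\<one>\<^bsub>Gs s\<^esub> = elt s []"
  by (simp add: Gs_def)

lemma wcong_cancel: "wcong s (x @ g # g # y) (x @ y)"
proof -
  have "wcong s [g, g] []" by (rule wcong.rel) (auto simp: relators_def)
  from wcong.ctxt[OF this, of x y] show ?thesis by simp
qed

lemma wcong_rev_append: "wcong s (rev w @ w) []"
proof (induction w)
  case Nil
  show ?case by (simp add: wcong.refl)
next
  case (Cons g w)
  have "wcong s (rev w @ g # g # w) (rev w @ w)" by (rule wcong_cancel)
  then show ?case using Cons by (auto intro: wcong.trans)
qed

lemma group_Gs: "group (Gs s)"
proof (rule groupI)
  fix x assume "x \<in> carrier (Gs s)"
  then obtain w where "x = elt s w" by (auto simp: carrier_Gs)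
  then show "\<exists>y \<in> carrier (Gs s). y \<otimes>\<^bsub>Gs s\<^esub> x = \<one>\<^bsub>Gs s\<^esub>"
    by (intro bexI[of _ "elt s (rev w)"])
       (auto simp: carrier_Gs elt_mult one_Gs elt_eq_iff wcong_rev_append)
qed (auto simp: carrier_Gs elt_mult one_Gs)

lemma wcong_braid:
  assumes "g \<noteq> h"
  shows "wcong s (x @ g # h # g # y) (x @ h # g # h # y)"
proof -
  have "wcong s [g, h, g, h, g, h] []"
    using assms by (intro wcong.rel) (auto simp: relators_def numeral_3_eq_3)
  from wcong.ctxt[OF wcong.sym[OF this], of "[]" "[h, g, h]"]
  have "wcong s [h, g, h] [g, h, g, h, g, h, h, g, h]" by simp
  also have "wcong s \<dots> [g, h, g, h, g, g, h]" using wcong_cancel[of s "[g, h, g, h, g]" h "[g, h]"] by simp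
  also have "wcong s \<dots> [g, h, g, h, h]" using wcong_cancel[of s "[g, h, g, h]" g "[h]"] by simp
  also have "wcong s \<dots> [g, h, g]" using wcong_cancel[of s "[g, h, g]" h "[]"] by simp
  finally have "wcong s [g, h, g] [h, g, h]" by (rule wcong.sym)
  from wcong.ctxt[OF this, of x y] show ?thesis by simp
qed

definition u_word :: "gen list" where "u_word = [R0, R1, R2, R1]"
definition v_word :: "gen list" where "v_word = [R1, R0, R1, R2]"

lemma wcong_u_pow: "wcong s (concat (replicate s u_word)) []"
  by (rule wcong.rel) (simp add: relators_def u_word_def)

lemma wcong_R1_u_R1: "wcong s (R1 # u_word @ [R1]) v_word"
  using wcong_cancel[of s "[R1, R0, R1, R2]" R1 "[]"] by (simp add: u_word_def v_word_def)

lemma wcong_u_v_commute: "wcong s (u_word @ v_word) (v_word @ u_word)"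
proof -
  have "wcong s [R0, R1, R2, R1, R1, R0, R1, R2] [R0, R1, R2, R0, R1, R2]"
    using wcong_cancel[of s "[R0, R1, R2]" R1 "[R0, R1, R2]"] by simp
  also have "wcong s \<dots> [R1, R1, R0, R1, R2, R0, R1, R2]"
    using wcong.sym[OF wcong_cancel[of s "[]" R1 "[R0, R1, R2, R0, R1, R2]"]] by simp
  also have "wcong s \<dots> [R1, R0, R1, R0, R2, R0, R1, R2]"
    using wcong.sym[OF wcong_braid[of R0 R1 s "[R1]" "[R2, R0, R1, R2]"]] by simp
  also have "wcong s \<dots> [R1, R0, R1, R2, R0, R2, R1, R2]"
    using wcong_braid[of R2 R0 s "[R1, R0, R1]" "[R1, R2]"] by (auto intro: wcong.sym)
  also have "wcong s \<dots> [R1, R0, R1, R2, R0, R1, R2, R1]"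
    using wcong_braid[of R1 R2 s "[R1, R0, R1, R2, R0]" "[]"] by (auto intro: wcong.sym)
  finally show ?thesis by (simp add: u_word_def v_word_def)
qed

lemma wcong_R2_u_R2: "wcong s (R2 # u_word @ [R2]) (u_word @ rev v_word)"
proof -
  have "wcong s [R2, R0, R1, R2, R1, R2] [R2, R0, R2, R1, R2, R2]"
    using wcong_braid[of R1 R2 s "[R2, R0]" "[R2]"] by simp
  also have "wcong s \<dots> [R2, R0, R2, R1]"
    using wcong_cancel[of s "[R2, R0, R2, R1]" R2 "[]"] by simp
  also have "wcong s \<dots> [R0, R2, R0, R1]"
    using wcong_braid[of R2 R0 s "[]" "[R1]"] by simp
  also have "wcong s \<dots> [R0, R2, R1, R1, R0, R1]"
    using wcong.sym[OF wcong_cancel[of s "[R0, R2]" R1 "[R0, R1]"]] by simp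
  also have "wcong s \<dots> [R0, R2, R1, R2, R2, R1, R0, R1]"
    using wcong.sym[OF wcong_cancel[of s "[R0, R2, R1]" R2 "[R1, R0, R1]"]] by simp
  also have "wcong s \<dots> [R0, R1, R2, R1, R2, R1, R0, R1]"
    using wcong.sym[OF wcong_braid[of R1 R2 s "[R0]" "[R2, R1, R0, R1]"]] by simp
  finally show ?thesis by (simp add: u_word_def v_word_def)
qed

lemma wcong_R2_v_R2: "wcong s (R2 # v_word @ [R2]) (rev v_word)"
  using wcong_cancel[of s "[R2, R1, R0, R1]" R2 "[]"] by (simp add: v_word_def)

lemma wcong_R0_u_R0: "wcong s (R0 # u_word @ [R0]) (rev u_word)"
  using wcong_cancel[of s "[]" R0 "[R1, R2, R1, R0]"] by (simp add: u_word_def)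

lemma wcong_R0: "wcong s (u_word @ [R1, R2, R1]) [R0]"
proof -
  have "wcong s [R0, R1, R2, R1, R1, R2, R1] [R0, R1, R2, R2, R1]"
    using wcong_cancel[of s "[R0, R1, R2]" R1 "[R2, R1]"] by simp
  also have "wcong s \<dots> [R0, R1, R1]" using wcong_cancel[of s "[R0, R1]" R2 "[R1]"] by simp
  also have "wcong s \<dots> [R0]" using wcong_cancel[of s "[R0]" R1 "[]"] by simp
  finally show ?thesis by (simp add: u_word_def)
qed

section \<open>An action on \<open>(\<int>/s\<int>)\<^sup>3\<close>\<close>

type_synonym point = "int \<times> int \<times> int"

definition reduce :: "nat \<Rightarrow> point \<Rightarrow> point" where
  "reduce s = (\<lambda>(x, y, z). (x mod int s, y mod int s, z mod int s))"

text \<open>Points of \<open>(\<int>/s\<int>)\<^sup>3\<close> are integer triples; a word acts by the composition of its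
  letters followed by reduction mod \<open>s\<close>, so that the empty word and all relators act as
  \<open>reduce s\<close>.  Then \<open>u\<close> acts as \<open>(x, y, z) \<mapsto> (x + 1, y, z - 1)\<close>.\<close>

fun gen_act :: "nat \<Rightarrow> gen \<Rightarrow> point \<Rightarrow> point" where
  "gen_act s R0 = (\<lambda>(x, y, z). ((z + 1) mod int s, y mod int s, (x - 1) mod int s))"
| "gen_act s R1 = (\<lambda>(x, y, z). (y mod int s, x mod int s, z mod int s))"
| "gen_act s R2 = (\<lambda>(x, y, z). (x mod int s, z mod int s, y mod int s))"

definition word_act :: "nat \<Rightarrow> gen list \<Rightarrow> point \<Rightarrow> point" where
  "word_act s w = foldr (\<lambda>g f. gen_act s g \<circ> f) w (reduce s)"

lemma word_act_Nil [simp]: "word_act s [] = reduce s"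
  by (simp add: word_act_def)

lemma word_act_Cons [simp]: "word_act s (g # w) = gen_act s g \<circ> word_act s w"
  by (simp add: word_act_def)

lemma reduce_word_act: "reduce s \<circ> word_act s w = word_act s w"
proof (cases w)
  case Nil
  then show ?thesis by (auto simp: reduce_def fun_eq_iff)
next
  case (Cons g w')
  have "reduce s \<circ> gen_act s g = gen_act s g" by (cases g) (auto simp: reduce_def fun_eq_iff)
  then show ?thesis using Cons by (simp flip: comp_assoc)
qed

lemma word_act_append: "word_act s (a @ b) = word_act s a \<circ> word_act s b"
  by (induction a) (simp_all add: reduce_word_act comp_assoc)

lemma word_act_u_pow:
  "word_act s (concat (replicate n u_word)) =
     (\<lambda>(x, y, z). ((x + int n) mod int s, y mod int s, (z - int n) mod int s))"
  by (induction n) (auto simp: reduce_def u_word_def fun_eq_iff mod_simps algebra_simps)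

lemma word_act_v_pow:
  "word_act s (concat (replicate n v_word)) =
     (\<lambda>(x, y, z). (x mod int s, (y + int n) mod int s, (z - int n) mod int s))"
  by (induction n) (auto simp: reduce_def v_word_def fun_eq_iff mod_simps algebra_simps)

lemma word_act_relator: "r \<in> relators s \<Longrightarrow> word_act s r = reduce s"
proof -
  have "word_act s [g, g] = reduce s" for g
    by (cases g) (auto simp: fun_eq_iff reduce_def mod_simps)
  moreover have "word_act s (concat (replicate 3 [g, h])) = reduce s" for g h
    by (cases g; cases h) (auto simp: fun_eq_iff reduce_def mod_simps numeral_3_eq_3)
  moreover have "word_act s (concat (replicate s u_word)) = reduce s"
    by (auto simp: word_act_u_pow reduce_def fun_eq_iff mod_simps)
  moreover assume "r \<in> relators s"
  ultimately show ?thesis by (auto simp: relators_def u_word_def simp del: word_act_Cons)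
qed

lemma word_act_wcong: "wcong s a b \<Longrightarrow> word_act s a = word_act s b"
  by (induction rule: wcong.induct) (auto simp: word_act_relator word_act_append)

definition act :: "nat \<Rightarrow> gen list set \<Rightarrow> point \<Rightarrow> point" where
  "act s A = word_act s (SOME w. w \<in> A)"

lemma act_elt: "act s (elt s w) = word_act s w"
proof -
  have "(SOME w'. w' \<in> elt s w) \<in> elt s w"
    by (rule someI[of _ w]) (simp add: elt_def wcong.refl)
  then show ?thesis by (simp add: act_def elt_def word_act_wcong)
qed

definition s3_words :: "gen list list" where
  "s3_words = [[], [R1], [R2], [R1, R2], [R2, R1], [R1, R2, R1]]"

definition coord_perm :: "nat \<Rightarrow> point \<Rightarrow> point" where
  "coord_perm k = (\<lambda>(x, y, z). [(x, y, z), (y, x, z), (x, z, y), (z, x, y), (y, z, x), (z, y, x)] ! k)"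

lemma word_act_s3_words: "k < 6 \<Longrightarrow> word_act s (s3_words ! k) = coord_perm k \<circ> reduce s"
  by (auto simp: less_Suc_eq numeral_eq_Suc s3_words_def coord_perm_def reduce_def fun_eq_iff)

text \<open>Moving the first (second) input coordinate moves exactly one output coordinate, whose
  position determines the permutation.\<close>

lemma coord_perm_determined:
  assumes "k < 6" "k' < 6" "x \<noteq> x1" "y \<noteq> y1"
    and "coord_perm k (x, y, z) = coord_perm k' (x', y', z')"
    and "coord_perm k (x1, y, z) = coord_perm k' (x1', y', z')"
    and "coord_perm k (x, y1, z) = coord_perm k' (x', y1', z')"
  shows "k = k'"
  using assms by (auto simp: less_Suc_eq numeral_eq_Suc coord_perm_def)

lemma coord_perm_inj: "k < 6 \<Longrightarrow> coord_perm k p = coord_perm k q \<Longrightarrow> p = q"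
  by (cases p; cases q) (auto simp: less_Suc_eq numeral_eq_Suc coord_perm_def)

definition translation_map :: "nat \<Rightarrow> nat \<Rightarrow> nat \<Rightarrow> point \<Rightarrow> point" where
  "translation_map s i j =
     (\<lambda>(x, y, z). ((x + int i) mod int s, (y + int j) mod int s, (z - int i - int j) mod int s))"

lemma succ_mod_neq:
  assumes "2 \<le> s" "a < s"
  shows "int a \<noteq> (int a + 1) mod int s"
proof
  assume h: "int a = (int a + 1) mod int s"
  have "int a mod int s = int a" using assms(2) by simp
  with h have "(int a + 1) mod int s = int a mod int s" by metis
  then have "int s dvd 1" by (simp add: mod_eq_dvd_iff)
  then show False using assms(1) by simp
qed

lemma coord_perm_translation_inj:
  assumes s: "2 \<le> s" and k: "k < 6" "k' < 6" and ij: "i < s" "j < s" "i' < s" "j' < s"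
    and eq: "coord_perm k \<circ> translation_map s i j = coord_perm k' \<circ> translation_map s i' j'"
  shows "k = k' \<and> i = i' \<and> j = j'"
proof -
  have e: "coord_perm k (translation_map s i j p) = coord_perm k' (translation_map s i' j' p)" for p
    using fun_cong[OF eq, of p] by simp
  have m: "int a mod int s = int a" if "a < s" for a using that by simp
  let ?z = "(- int i - int j) mod int s" and ?z' = "(- int i' - int j') mod int s"
  have c0: "coord_perm k (int i, int j, ?z) = coord_perm k' (int i', int j', ?z')"
    using e[of "(0, 0, 0)"] by (simp add: translation_map_def m ij)
  have c1: "coord_perm k ((int i + 1) mod int s, int j, ?z)
      = coord_perm k' ((int i' + 1) mod int s, int j', ?z')"
    using e[of "(1, 0, 0)"] by (simp add: translation_map_def m ij add.commute)
  have c2: "coord_perm k (int i, (int j + 1) mod int s, ?z)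
      = coord_perm k' (int i', (int j' + 1) mod int s, ?z')"
    using e[of "(0, 1, 0)"] by (simp add: translation_map_def m ij add.commute)
  have kk': "k = k'"
    by (rule coord_perm_determined[OF k succ_mod_neq[OF s ij(1)] succ_mod_neq[OF s ij(2)] c0 c1 c2])
  from c0 have "(int i, int j, ?z) = (int i', int j', ?z')"
    unfolding kk' by (rule coord_perm_inj[OF k(2)])
  with kk' show ?thesis by simp
qed

lemma s3_words_snoc:
  assumes "w \<in> set s3_words" "g \<noteq> R0"
  shows "\<exists>w' \<in> set s3_words. wcong s (w @ [g]) w'"
proof -
  have "wcong s [R1, R2, R1, R2] [R2, R1]"
    using wcong_braid[of R1 R2 s "[]" "[R2]"] wcong_cancel[of s "[R2, R1]" R2 "[]"]
    by (auto intro: wcong.trans)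
  moreover have "wcong s [R2, R1, R2] [R1, R2, R1]" using wcong_braid[of R2 R1 s "[]" "[]"] by simp
  ultimately show ?thesis
    using assms wcong_cancel[of s "[]"] wcong_cancel[of s "[R1]"] wcong_cancel[of s "[R2]"]
      wcong_cancel[of s "[R1, R2]"]
    by (cases g) (auto simp: s3_words_def intro: wcong.refl)
qed

section \<open>Normal form and order\<close>

context
  fixes s :: nat
begin

interpretation G: group "Gs s" by (rule group_Gs)

abbreviation gmult (infixl "\<diamond>" 70) where "x \<diamond> y \<equiv> x \<otimes>\<^bsub>Gs s\<^esub> y"
abbreviation gpow (infixr "^^^" 75) where "x ^^^ n \<equiv> x [^]\<^bsub>Gs s\<^esub> (n::nat)"

definition v_elt :: "gen list set" where "v_elt = elt s v_word"

definition transl :: "nat \<Rightarrow> nat \<Rightarrow> gen list set" where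
  "transl i j = u_elt s ^^^ i \<diamond> v_elt ^^^ j"

lemma elt_in_carrier [simp]: "elt s w \<in> carrier (Gs s)"
  by (simp add: carrier_Gs)

lemma u_elt_eq: "u_elt s = elt s u_word"
  by (simp add: u_elt_def u_word_def)

lemma u_v_in_carrier [simp]: "u_elt s \<in> carrier (Gs s)" "v_elt \<in> carrier (Gs s)"
  by (simp_all add: u_elt_eq v_elt_def)

lemma transl_in_carrier [simp]: "transl i j \<in> carrier (Gs s)"
  by (simp add: transl_def)

lemma elt_pow: "elt s w ^^^ n = elt s (concat (replicate n w))"
proof -
  have "concat (replicate n w) @ w = w @ concat (replicate n w)" by (induction n) simp_all
  then show ?thesis by (induction n) (simp_all add: one_Gs elt_mult)
qed

lemma inv_elt: "inv\<^bsub>Gs s\<^esub> (elt s w) = elt s (rev w)"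
  by (rule G.inv_equality) (simp_all add: elt_mult one_Gs elt_eq_iff wcong_rev_append)

lemma gen_involution: "elt s [g] \<diamond> elt s [g] = \<one>\<^bsub>Gs s\<^esub>"
  using wcong_cancel[of s "[]" g "[]"] by (simp add: elt_mult one_Gs elt_eq_iff)

lemma u_pow_order: "u_elt s ^^^ s = \<one>\<^bsub>Gs s\<^esub>"
  by (simp add: u_elt_eq elt_pow one_Gs elt_eq_iff wcong_u_pow)

lemma u_v_commute: "u_elt s \<diamond> v_elt = v_elt \<diamond> u_elt s"
  by (simp add: u_elt_eq v_elt_def elt_mult elt_eq_iff wcong_u_v_commute)

lemma R1_conj_u: "elt s [R1] \<diamond> u_elt s \<diamond> elt s [R1] = v_elt"
  by (simp add: u_elt_eq v_elt_def elt_mult elt_eq_iff wcong_R1_u_R1)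

lemma R1_conj_v: "elt s [R1] \<diamond> v_elt \<diamond> elt s [R1] = u_elt s"
proof -
  have "elt s [R1] \<diamond> v_elt \<diamond> elt s [R1]
      = (elt s [R1] \<diamond> elt s [R1]) \<diamond> u_elt s \<diamond> (elt s [R1] \<diamond> elt s [R1])"
    by (simp add: R1_conj_u[symmetric] G.m_assoc)
  then show ?thesis by (simp add: gen_involution)
qed

lemma R2_conj_u: "elt s [R2] \<diamond> u_elt s \<diamond> elt s [R2] = u_elt s \<diamond> inv\<^bsub>Gs s\<^esub> v_elt"
  by (simp add: u_elt_eq v_elt_def inv_elt elt_mult elt_eq_iff wcong_R2_u_R2)

lemma R2_conj_v: "elt s [R2] \<diamond> v_elt \<diamond> elt s [R2] = inv\<^bsub>Gs s\<^esub> v_elt"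
  by (simp add: v_elt_def inv_elt elt_mult elt_eq_iff wcong_R2_v_R2)

lemma R0_conj_u: "elt s [R0] \<diamond> u_elt s \<diamond> elt s [R0] = inv\<^bsub>Gs s\<^esub> (u_elt s)"
  by (simp add: u_elt_eq inv_elt elt_mult elt_eq_iff wcong_R0_u_R0)

lemma R0_eq: "u_elt s \<diamond> elt s [R1] \<diamond> elt s [R2] \<diamond> elt s [R1] = elt s [R0]"
  using wcong_R0[of s] by (simp add: u_elt_eq elt_mult elt_eq_iff)

lemma v_pow_order: "v_elt ^^^ s = \<one>\<^bsub>Gs s\<^esub>"
  using G.conj_involution_pow[of "elt s [R1]" "u_elt s" s]
  by (simp add: R1_conj_u gen_involution u_pow_order)

lemma u_v_pow_commute: "u_elt s ^^^ i \<diamond> v_elt ^^^ j = v_elt ^^^ j \<diamond> u_elt s ^^^ i"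
proof -
  have "u_elt s ^^^ i \<diamond> v_elt = v_elt \<diamond> u_elt s ^^^ i"
    by (rule G.group_commutes_pow[OF u_v_commute]) simp_all
  from G.group_commutes_pow[OF this[symmetric]] show ?thesis by simp
qed

lemma transl_mult_u: "transl i j \<diamond> u_elt s = transl (Suc i) j"
  using u_v_pow_commute[of 1 j] by (simp add: transl_def G.m_assoc)

lemma R1_conj_transl: "elt s [R1] \<diamond> transl i j \<diamond> elt s [R1] = transl j i"
proof -
  have "elt s [R1] \<diamond> transl i j \<diamond> elt s [R1]
      = (elt s [R1] \<diamond> u_elt s ^^^ i \<diamond> elt s [R1]) \<diamond> (elt s [R1] \<diamond> v_elt ^^^ j \<diamond> elt s [R1])"
    unfolding transl_def by (rule G.conj_involution_mult) (simp_all add: gen_involution)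
  also have "\<dots> = v_elt ^^^ i \<diamond> u_elt s ^^^ j"
    by (simp add: G.conj_involution_pow gen_involution R1_conj_u R1_conj_v)
  finally show ?thesis by (simp add: transl_def u_v_pow_commute)
qed

lemma R2_conj_transl:
  assumes "0 < s"
  shows "elt s [R2] \<diamond> transl i j \<diamond> elt s [R2] = transl i ((s - 1) * i + (s - 1) * j)"
proof -
  have v_inv: "inv\<^bsub>Gs s\<^esub> v_elt = v_elt ^^^ (s - 1)"
    using G.inv_eq_nat_pow_pred[OF _ v_pow_order assms] by simp
  have "elt s [R2] \<diamond> transl i j \<diamond> elt s [R2]
      = (elt s [R2] \<diamond> u_elt s ^^^ i \<diamond> elt s [R2]) \<diamond> (elt s [R2] \<diamond> v_elt ^^^ j \<diamond> elt s [R2])"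
    unfolding transl_def by (rule G.conj_involution_mult) (simp_all add: gen_involution)
  also have "\<dots> = (u_elt s \<diamond> v_elt ^^^ (s - 1)) ^^^ i \<diamond> (v_elt ^^^ (s - 1)) ^^^ j"
    by (simp add: G.conj_involution_pow gen_involution R2_conj_u R2_conj_v v_inv)
  also have "(u_elt s \<diamond> v_elt ^^^ (s - 1)) ^^^ i = u_elt s ^^^ i \<diamond> v_elt ^^^ ((s - 1) * i)"
    using u_v_pow_commute[of 1 "s - 1"]
    by (subst G.pow_mult_distrib) (simp_all add: G.nat_pow_pow)
  also have "u_elt s ^^^ i \<diamond> v_elt ^^^ ((s - 1) * i) \<diamond> (v_elt ^^^ (s - 1)) ^^^ j
      = transl i ((s - 1) * i + (s - 1) * j)"
    by (simp add: transl_def G.m_assoc G.nat_pow_mult G.nat_pow_pow)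
  finally show ?thesis .
qed

lemma transl_mod: "transl i j = transl (i mod s) (j mod s)"
  unfolding transl_def
  using G.nat_pow_mod_eq[OF u_v_in_carrier(1) u_pow_order, of i]
    G.nat_pow_mod_eq[OF u_v_in_carrier(2) v_pow_order, of j] by simp

definition normal_forms :: "gen list set set" where
  "normal_forms = {elt s w \<diamond> transl i j | w i j. w \<in> set s3_words}"

lemma normal_forms_mult_gen:
  assumes "0 < s" "x \<in> normal_forms"
  shows "x \<diamond> elt s [g] \<in> normal_forms"
proof -
  have swap: "y \<diamond> elt s [g'] \<in> normal_forms" if yN: "y \<in> normal_forms" and g': "g' \<noteq> R0" for y g'
  proof -
    obtain w i j where y: "w \<in> set s3_words" "y = elt s w \<diamond> transl i j"
      using yN by (auto simp: normal_forms_def)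
    obtain w' where w': "w' \<in> set s3_words" "wcong s (w @ [g']) w'"
      using s3_words_snoc[OF y(1) g'] by blast
    obtain i' j' where t: "elt s [g'] \<diamond> transl i j \<diamond> elt s [g'] = transl i' j'"
      using g' R1_conj_transl R2_conj_transl[OF assms(1)] by (cases g') blast+
    have "y \<diamond> elt s [g'] = (elt s w \<diamond> elt s [g']) \<diamond> (elt s [g'] \<diamond> transl i j \<diamond> elt s [g'])"
      unfolding y(2) by (rule G.mult_involution_conj) (simp_all add: gen_involution)
    also have "\<dots> = elt s w' \<diamond> transl i' j'"
      using w'(2) t by (simp add: elt_mult elt_eq_iff)
    finally show ?thesis using w'(1) by (auto simp: normal_forms_def)
  qed
  have u: "y \<diamond> u_elt s \<in> normal_forms" if yN: "y \<in> normal_forms" for y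
  proof -
    obtain w i j where "w \<in> set s3_words" "y = elt s w \<diamond> transl i j"
      using yN by (auto simp: normal_forms_def)
    then have "w \<in> set s3_words" "y \<diamond> u_elt s = elt s w \<diamond> transl (Suc i) j"
      by (simp_all add: G.m_assoc transl_mult_u)
    then show ?thesis by (auto simp: normal_forms_def)
  qed
  show ?thesis
  proof (cases "g = R0")
    case True
    have "x \<in> carrier (Gs s)" using assms(2) by (auto simp: normal_forms_def)
    then have "x \<diamond> elt s [R0] = x \<diamond> u_elt s \<diamond> elt s [R1] \<diamond> elt s [R2] \<diamond> elt s [R1]"
      by (simp add: R0_eq[symmetric] G.m_assoc)
    then show ?thesis using True assms(2) by (simp add: swap u)
  qed (use assms(2) swap in blast)
qed

lemma elt_in_normal_forms:
  assumes "0 < s"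
  shows "elt s w \<in> normal_forms"
proof (induction w rule: rev_induct)
  case Nil
  have "elt s [] = elt s [] \<diamond> transl 0 0" by (simp add: transl_def)
  moreover have "[] \<in> set s3_words" by (simp add: s3_words_def)
  ultimately show ?case unfolding normal_forms_def by blast
next
  case (snoc g w)
  then show ?case using normal_forms_mult_gen[OF assms] by (simp flip: elt_mult)
qed

lemma carrier_normal_form:
  assumes "0 < s" "x \<in> carrier (Gs s)"
  shows "\<exists>k i j. k < 6 \<and> i < s \<and> j < s \<and> x = elt s (s3_words ! k) \<diamond> transl i j"
proof -
  obtain v where "x = elt s v" using assms(2) by (auto simp: carrier_Gs)
  then have "x \<in> normal_forms" using elt_in_normal_forms[OF assms(1)] by simp
  then obtain w i j where w: "w \<in> set s3_words" and x: "x = elt s w \<diamond> transl i j"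
    by (auto simp: normal_forms_def)
  have "length s3_words = 6" by (simp add: s3_words_def)
  then obtain k where "k < 6" "w = s3_words ! k" using w by (metis in_set_conv_nth)
  with x show ?thesis
    using assms(1) by (intro exI[of _ k] exI[of _ "i mod s"] exI[of _ "j mod s"])
      (simp add: transl_mod[of i j])
qed

lemma act_mult:
  "x \<in> carrier (Gs s) \<Longrightarrow> y \<in> carrier (Gs s) \<Longrightarrow> act s (x \<diamond> y) = act s x \<circ> act s y"
  by (auto simp: carrier_Gs elt_mult act_elt word_act_append)

lemma act_transl: "act s (transl i j) = translation_map s i j"
proof -
  have "act s (transl i j) = word_act s (concat (replicate i u_word)) \<circ> word_act s (concat (replicate j v_word))"
    by (simp add: transl_def u_elt_eq v_elt_def elt_pow act_mult act_elt)
  then show ?thesis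
    by (simp add: word_act_u_pow word_act_v_pow translation_map_def fun_eq_iff mod_simps algebra_simps)
qed

lemma act_normal_form:
  "k < 6 \<Longrightarrow> act s (elt s (s3_words ! k) \<diamond> transl i j) = coord_perm k \<circ> translation_map s i j"
  by (auto simp: act_mult act_elt act_transl word_act_s3_words fun_eq_iff translation_map_def reduce_def)

lemma normal_form_unique:
  assumes "2 \<le> s" "k < 6" "k' < 6" "i < s" "j < s" "i' < s" "j' < s"
    and "elt s (s3_words ! k) \<diamond> transl i j = elt s (s3_words ! k') \<diamond> transl i' j'"
  shows "k = k' \<and> i = i' \<and> j = j'"
  using arg_cong[OF assms(8), of "act s"] assms(1-7)
  by (intro coord_perm_translation_inj) (simp_all add: act_normal_form)

lemma order_Gs:
  assumes "2 \<le> s"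
  shows "order (Gs s) = 6 * s * s"
proof -
  let ?nf = "\<lambda>(k, i, j). elt s (s3_words ! k) \<diamond> transl i j"
  let ?D = "{..<6} \<times> {..<s} \<times> {..<s}"
  have "carrier (Gs s) = ?nf ` ?D"
  proof
    show "carrier (Gs s) \<subseteq> ?nf ` ?D"
    proof
      fix x assume x: "x \<in> carrier (Gs s)"
      have "0 < s" using assms by simp
      then obtain k i j where "k < 6" "i < s" "j < s" "x = elt s (s3_words ! k) \<diamond> transl i j"
        using carrier_normal_form x by blast
      then show "x \<in> ?nf ` ?D" by (intro image_eqI[of _ _ "(k, i, j)"]) auto
    qed
  qed auto
  moreover have "inj_on ?nf ?D"
  proof (rule inj_onI)
    fix p q assume "p \<in> ?D" "q \<in> ?D" "?nf p = ?nf q"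
    moreover obtain k i j k' i' j' where "p = (k, i, j)" "q = (k', i', j')" by (cases p, cases q)
    ultimately show "p = q" using normal_form_unique[OF assms, of k k' i j i' j'] by simp
  qed
  ultimately show ?thesis by (simp add: order_def card_image)
qed

section \<open>The subgroup \<open>\<langle>u\<^sup>d\<rangle> \<rtimes> \<langle>\<rho>\<^sub>0\<rangle>\<close>\<close>

definition dihedral_subgroup :: "nat \<Rightarrow> gen list set set" where
  "dihedral_subgroup d =
     {u_elt s ^^^ n | n. d dvd n} \<union> {u_elt s ^^^ n \<diamond> elt s [R0] | n. d dvd n}"

lemma u_pow_inv:
  assumes "0 < s"
  shows "inv\<^bsub>Gs s\<^esub> (u_elt s ^^^ n) = u_elt s ^^^ ((s - 1) * n)"
  using G.inv_eq_nat_pow_pred[OF u_v_in_carrier(1) u_pow_order assms]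
  by (simp add: G.nat_pow_inv[symmetric] G.nat_pow_pow)

lemma R0_mult_u_pow:
  assumes "0 < s"
  shows "elt s [R0] \<diamond> u_elt s ^^^ n = u_elt s ^^^ ((s - 1) * n) \<diamond> elt s [R0]"
proof -
  have "elt s [R0] \<diamond> u_elt s ^^^ n \<diamond> elt s [R0] = u_elt s ^^^ ((s - 1) * n)"
    by (simp add: G.conj_involution_pow gen_involution R0_conj_u G.nat_pow_pow
        u_pow_inv[OF assms, of 1, simplified])
  then have "elt s [R0] \<diamond> u_elt s ^^^ n \<diamond> elt s [R0] \<diamond> elt s [R0]
      = u_elt s ^^^ ((s - 1) * n) \<diamond> elt s [R0]" by simp
  then show ?thesis by (simp add: G.m_assoc gen_involution)
qed

lemma reflection_mult_u_pow:
  assumes "0 < s"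
  shows "u_elt s ^^^ n \<diamond> elt s [R0] \<diamond> u_elt s ^^^ m = u_elt s ^^^ (n + (s - 1) * m) \<diamond> elt s [R0]"
  by (simp add: G.m_assoc R0_mult_u_pow[OF assms]) (simp add: G.m_assoc[symmetric] G.nat_pow_mult)

lemma reflection_mult_reflection:
  assumes "0 < s"
  shows "u_elt s ^^^ n \<diamond> elt s [R0] \<diamond> (u_elt s ^^^ m \<diamond> elt s [R0]) = u_elt s ^^^ (n + (s - 1) * m)"
  using reflection_mult_u_pow[OF assms, of n m]
  by (simp add: G.m_assoc[symmetric]) (simp add: G.m_assoc gen_involution)

lemma reflection_involution:
  assumes "0 < s"
  shows "u_elt s ^^^ n \<diamond> elt s [R0] \<diamond> (u_elt s ^^^ n \<diamond> elt s [R0]) = \<one>\<^bsub>Gs s\<^esub>"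
proof -
  have "n + (s - 1) * n = s * n" using assms by (cases s) auto
  then show ?thesis
    by (simp add: reflection_mult_reflection[OF assms] G.nat_pow_pow[symmetric] u_pow_order)
qed

lemma subgroup_dihedral_subgroup:
  assumes "0 < s"
  shows "subgroup (dihedral_subgroup d) (Gs s)"
proof (rule G.subgroupI)
  fix x y assume "x \<in> dihedral_subgroup d" "y \<in> dihedral_subgroup d"
  then obtain n m where nm: "d dvd n" "d dvd m"
    and x: "x = u_elt s ^^^ n \<or> x = u_elt s ^^^ n \<diamond> elt s [R0]"
    and y: "y = u_elt s ^^^ m \<or> y = u_elt s ^^^ m \<diamond> elt s [R0]"
    by (auto simp: dihedral_subgroup_def)
  have "d dvd n + (s - 1) * m" "d dvd n + m" using nm by simp_all
  moreover have "u_elt s ^^^ n \<diamond> (u_elt s ^^^ m \<diamond> elt s [R0]) = u_elt s ^^^ (n + m) \<diamond> elt s [R0]"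
    by (simp add: G.m_assoc[symmetric] G.nat_pow_mult)
  ultimately show "x \<diamond> y \<in> dihedral_subgroup d"
    using x y reflection_mult_u_pow[OF assms] reflection_mult_reflection[OF assms]
    by (auto simp: dihedral_subgroup_def G.nat_pow_mult)
next
  fix x assume "x \<in> dihedral_subgroup d"
  then obtain n where n: "d dvd n" "x = u_elt s ^^^ n \<or> x = u_elt s ^^^ n \<diamond> elt s [R0]"
    by (auto simp: dihedral_subgroup_def)
  moreover have "inv\<^bsub>Gs s\<^esub> (u_elt s ^^^ n \<diamond> elt s [R0]) = u_elt s ^^^ n \<diamond> elt s [R0]"
    by (rule G.inv_equality) (simp_all add: reflection_involution[OF assms])
  ultimately show "inv\<^bsub>Gs s\<^esub> x \<in> dihedral_subgroup d"
    by (auto simp: dihedral_subgroup_def u_pow_inv[OF assms])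
qed (auto simp: dihedral_subgroup_def)

lemma generate_dihedral_subgroup:
  assumes "0 < s"
  shows "generate (Gs s) {u_elt s ^^^ d, elt s [R0]} = dihedral_subgroup d"
    (is "generate _ ?S = _")
proof
  show "generate (Gs s) ?S \<subseteq> dihedral_subgroup d"
  proof (rule G.generate_subgroup_incl[OF _ subgroup_dihedral_subgroup[OF assms]])
    have "u_elt s ^^^ d \<in> dihedral_subgroup d"
      unfolding dihedral_subgroup_def by (intro UnI1 CollectI exI[of _ d]) simp
    moreover have "elt s [R0] \<in> dihedral_subgroup d"
      unfolding dihedral_subgroup_def by (intro UnI2 CollectI exI[of _ 0]) simp
    ultimately show "?S \<subseteq> dihedral_subgroup d" by simp
  qed
next
  have u: "u_elt s ^^^ (d * m) \<in> generate (Gs s) ?S" for m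
  proof (induction m)
    case 0
    then show ?case by (simp add: generate.one)
  next
    case (Suc m)
    have "u_elt s ^^^ (d * Suc m) = u_elt s ^^^ (d * m) \<diamond> u_elt s ^^^ d"
      by (simp add: G.nat_pow_mult add.commute)
    then show ?case using generate.eng[OF Suc generate.incl[of "u_elt s ^^^ d"]] by simp
  qed
  have R0: "elt s [R0] \<in> generate (Gs s) ?S" by (simp add: generate.incl)
  show "dihedral_subgroup d \<subseteq> generate (Gs s) ?S"
  proof
    fix x assume "x \<in> dihedral_subgroup d"
    then obtain m where "x = u_elt s ^^^ (d * m) \<or> x = u_elt s ^^^ (d * m) \<diamond> elt s [R0]"
      by (auto simp: dihedral_subgroup_def elim!: dvdE)
    then show "x \<in> generate (Gs s) ?S" using u[of m] generate.eng[OF u[of m] R0] by blast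
  qed
qed

lemma act_u_pow: "act s (u_elt s ^^^ n) = translation_map s n 0"
  using act_transl[of n 0] by (simp add: transl_def)

lemma act_R0: "act s (elt s [R0]) = gen_act s R0"
  by (auto simp: act_elt reduce_def fun_eq_iff mod_simps)

lemma act_R1: "act s (elt s [R1]) = gen_act s R1"
  by (auto simp: act_elt reduce_def fun_eq_iff mod_simps)

lemma act_dihedral_subgroup_snd:
  "h \<in> dihedral_subgroup d \<Longrightarrow> fst (snd (act s h (x, y, z))) = y mod int s"
  by (auto simp: dihedral_subgroup_def act_mult act_u_pow act_R0 translation_map_def)

lemma u_pow_inj:
  assumes "n < s" "m < s" "u_elt s ^^^ n = u_elt s ^^^ m"
  shows "n = m"
  using arg_cong[OF assms(3), of "\<lambda>g. act s g (0, 0, 0)"] assms(1,2)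
  by (simp add: act_u_pow translation_map_def)

lemma u_pow_neq_reflection:
  assumes "2 \<le> s"
  shows "u_elt s ^^^ n \<noteq> u_elt s ^^^ m \<diamond> elt s [R0]"
proof
  assume h: "u_elt s ^^^ n = u_elt s ^^^ m \<diamond> elt s [R0]"
  have e: "translation_map s n 0 p = translation_map s m 0 (gen_act s R0 p)" for p
    using arg_cong[OF h, of "\<lambda>g. act s g p"]
    by (simp add: act_mult act_u_pow act_R0 del: gen_act.simps)
  have "int n mod int s = (1 + int m) mod int s"
    using e[of "(0, 0, 0)"] by (simp add: translation_map_def mod_simps add.commute)
  moreover have "(1 + int n) mod int s = (1 + int m) mod int s"
    using e[of "(1, 0, 0)"] by (simp add: translation_map_def mod_simps add.commute)
  ultimately have "int s dvd (1 + int n - (1 + int m)) - (int n - (1 + int m))"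
    by (simp only: mod_eq_dvd_iff dvd_diff)
  then show False using assms by simp
qed

lemma u_pow_dvd_reduce:
  assumes "0 < s" "d dvd s" "d dvd n"
  shows "\<exists>m < s div d. u_elt s ^^^ n = u_elt s ^^^ (d * m)"
proof -
  have "d dvd n mod s" using assms(2,3) by (simp add: dvd_mod)
  then obtain m where m: "n mod s = d * m" by (auto elim: dvdE)
  have "d * m < d * (s div d)" using m assms(1,2) by (metis dvd_mult_div_cancel mod_less_divisor)
  then show ?thesis
    using m G.nat_pow_mod_eq[OF u_v_in_carrier(1) u_pow_order, of n] by auto
qed

lemma card_dihedral_subgroup:
  assumes "2 \<le> s" "0 < d" "d dvd s"
  shows "card (dihedral_subgroup d) = 2 * (s div d)"
proof -
  define q where "q = s div d"
  have sq: "s = d * q" using assms(3) by (simp add: q_def)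
  let ?A = "(\<lambda>m. u_elt s ^^^ (d * m)) ` {..<q}"
  let ?B = "(\<lambda>m. u_elt s ^^^ (d * m) \<diamond> elt s [R0]) ` {..<q}"
  have "dihedral_subgroup d = ?A \<union> ?B"
  proof
    show "dihedral_subgroup d \<subseteq> ?A \<union> ?B"
    proof
      fix x assume "x \<in> dihedral_subgroup d"
      then obtain n where n: "d dvd n" "x = u_elt s ^^^ n \<or> x = u_elt s ^^^ n \<diamond> elt s [R0]"
        unfolding dihedral_subgroup_def by blast
      obtain m where "m < q" "u_elt s ^^^ n = u_elt s ^^^ (d * m)"
        using u_pow_dvd_reduce[OF _ assms(3) n(1)] assms(1) by (auto simp: q_def)
      then show "x \<in> ?A \<union> ?B" using n(2) by auto
    qed
  qed (auto simp: dihedral_subgroup_def)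
  moreover have dm: "d * m < s" if "m < q" for m using that sq assms(2) by simp
  have "inj_on (\<lambda>m. u_elt s ^^^ (d * m)) {..<q}"
  proof (rule inj_onI)
    fix m m' assume "m \<in> {..<q}" "m' \<in> {..<q}" "u_elt s ^^^ (d * m) = u_elt s ^^^ (d * m')"
    then have "d * m = d * m'" using u_pow_inj dm by (meson lessThan_iff)
    then show "m = m'" using assms(2) by simp
  qed
  moreover have "inj_on (\<lambda>m. u_elt s ^^^ (d * m) \<diamond> elt s [R0]) {..<q}"
  proof (rule inj_onI)
    fix m m' assume "m \<in> {..<q}" "m' \<in> {..<q}"
      and "u_elt s ^^^ (d * m) \<diamond> elt s [R0] = u_elt s ^^^ (d * m') \<diamond> elt s [R0]"
    then have "u_elt s ^^^ (d * m) = u_elt s ^^^ (d * m')" by (simp add: G.r_cancel)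
    then have "d * m = d * m'" using u_pow_inj dm \<open>m \<in> {..<q}\<close> \<open>m' \<in> {..<q}\<close>
      by (meson lessThan_iff)
    then show "m = m'" using assms(2) by simp
  qed
  moreover have "?A \<inter> ?B = {}" using u_pow_neq_reflection[OF assms(1)] by auto
  ultimately show ?thesis by (simp add: card_Un_disjoint card_image q_def)
qed

lemma R2_conj_u_pow_in_dihedral_subgroup:
  assumes "0 < s" "elt s [R2] \<diamond> u_elt s ^^^ t \<diamond> elt s [R2] \<in> dihedral_subgroup d"
  shows "u_elt s ^^^ t = \<one>\<^bsub>Gs s\<^esub>"
proof -
  define t' where "t' = t mod s"
  have u_t: "u_elt s ^^^ t = transl t' 0"
    using G.nat_pow_mod_eq[OF u_v_in_carrier(1) u_pow_order] by (simp add: transl_def t'_def)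
  then have "transl t' ((s - 1) * t') \<in> dihedral_subgroup d"
    using assms R2_conj_transl[OF assms(1), of t' 0] by simp
  from act_dihedral_subgroup_snd[OF this, of 0 0 0]
  have "int (s - 1) * int t' mod int s = 0" by (simp add: act_transl translation_map_def)
  then have "s dvd (s - 1) * t'" by (metis dvd_eq_mod_eq_0 of_nat_dvd_iff of_nat_mult)
  moreover have "(s - 1) * t' + t' = s * t'" using assms(1) by (cases s) auto
  ultimately have "s dvd t'" by (metis dvd_add_right_iff dvd_triv_left)
  then have "t' = 0"
    using assms(1) mod_less_divisor[OF assms(1), of t] by (metis t'_def dvd_imp_le leD neq0_conv)
  then show ?thesis using u_t by (simp add: transl_def)
qed

lemma R1_conj_reflection_notin_dihedral_subgroup:
  assumes "2 \<le> s"
  shows "elt s [R1] \<diamond> (u_elt s ^^^ t \<diamond> elt s [R0]) \<diamond> elt s [R1] \<notin> dihedral_subgroup d"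
proof
  let ?g = "elt s [R1] \<diamond> (u_elt s ^^^ t \<diamond> elt s [R0]) \<diamond> elt s [R1]"
  assume "?g \<in> dihedral_subgroup d"
  from act_dihedral_subgroup_snd[OF this]
  have "fst (snd (act s ?g (0, 0, 0))) = 0" "fst (snd (act s ?g (0, 1, 0))) = 1"
    using assms by simp_all
  moreover have "act s ?g = gen_act s R1 \<circ> translation_map s t 0 \<circ> gen_act s R0 \<circ> gen_act s R1"
    by (simp add: act_mult act_u_pow act_R0 act_R1 comp_assoc)
  ultimately show False
    by (simp add: translation_map_def mod_simps add.commute)
qed

lemma core_free_dihedral_subgroup:
  assumes "2 \<le> s"
  shows "core_free (Gs s) (dihedral_subgroup d)"
  unfolding core_free_def
proof (intro allI impI, elim conjE)
  fix N assume N: "N \<lhd> Gs s" and NH: "N \<subseteq> dihedral_subgroup d"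
  interpret N: normal N "Gs s" by (fact N)
  have conj: "elt s [g] \<diamond> n \<diamond> elt s [g] \<in> dihedral_subgroup d" if "n \<in> N" for g n
  proof -
    have "inv\<^bsub>Gs s\<^esub> (elt s [g]) = elt s [g]"
      by (rule G.inv_involution[OF elt_in_carrier gen_involution])
    then have "elt s [g] \<diamond> n \<diamond> elt s [g] \<in> N"
      using N.inv_op_closed2[OF elt_in_carrier that, of "[g]"] by simp
    then show ?thesis using NH by blast
  qed
  have "n = \<one>\<^bsub>Gs s\<^esub>" if n: "n \<in> N" for n
  proof -
    have "n \<in> dihedral_subgroup d" using n NH by blast
    then obtain t where "n = u_elt s ^^^ t \<or> n = u_elt s ^^^ t \<diamond> elt s [R0]"
      unfolding dihedral_subgroup_def by blast
    then show ?thesis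
    proof
      assume "n = u_elt s ^^^ t"
      then show ?thesis
        using R2_conj_u_pow_in_dihedral_subgroup[of t d] conj[OF n, of R2] assms by simp
    next
      assume "n = u_elt s ^^^ t \<diamond> elt s [R0]"
      then show ?thesis
        using R1_conj_reflection_notin_dihedral_subgroup[OF assms, of t d] conj[OF n, of R1] by simp
    qed
  qed
  then show "N = {\<one>\<^bsub>Gs s\<^esub>}" using N.one_closed by blast
qed

end

theorem mainTheorem7:
  fixes s d :: nat
  assumes "s \<ge> 2" and "d > 0" and "d dvd s"
  defines "H \<equiv> generate (Gs s) {u_elt s [^]\<^bsub>Gs s\<^esub> d, elt s [R0]}"
  shows "subgroup H (Gs s)
         \<and> core_free (Gs s) H
         \<and> card (rcosets\<^bsub>Gs s\<^esub> H) = 3 * d * s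
         \<and> faithful_transitive_rep (Gs s) {..<3 * d * s}"
proof -
  have s0: "0 < s" using assms(1) by simp
  have H: "H = dihedral_subgroup s d"
    unfolding H_def by (rule generate_dihedral_subgroup[OF s0])
  have sub: "subgroup H (Gs s)" using subgroup_dihedral_subgroup[OF s0] H by simp
  have cf: "core_free (Gs s) H" using core_free_dihedral_subgroup[OF assms(1)] H by simp
  have "card (rcosets\<^bsub>Gs s\<^esub> H) * (2 * (s div d)) = (3 * d * s) * (2 * (s div d))"
    using group.lagrange[OF group_Gs sub] card_dihedral_subgroup[OF assms(1-3)] order_Gs[OF assms(1)] H
      assms(3) by (auto elim!: dvdE)
  moreover have "0 < s div d" using assms(1-3) by (auto elim!: dvdE intro: Nat.gr0I)
  ultimately have card: "card (rcosets\<^bsub>Gs s\<^esub> H) = 3 * d * s" by simp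
  then have "finite (rcosets\<^bsub>Gs s\<^esub> H)" using assms(1-3) by (intro card_ge_0_finite) simp
  then obtain \<beta> where "bij_betw \<beta> {..<3 * d * s} (rcosets\<^bsub>Gs s\<^esub> H)"
    using ex_bij_betw_nat_finite card by (metis atLeast0LessThan)
  with group.faithful_transitive_rep_rcosets[OF group_Gs sub cf]
  have "faithful_transitive_rep (Gs s) {..<3 * d * s}" by (rule faithful_transitive_rep_transfer)
  with sub cf card show ?thesis by blast
qed

end
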